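(* Let $G$ be a graph. If some graph in the LC orbit $[G]$ contains a clique of size $k\ge 1$, then $\lambda(G)\ge k-1$. Equivalently, every graph in $[G]$ has clique number at most $\lambda(G)+1$.
   Context: All graphs are finite, simple and undirected. For a graph $G=(V,E)$ and $v\in V$, let $N_v$ be the neighbourhood of $v$; the local complementation $G^v$ is obtained by complementing the subgraph induced on $N_v$. The LC orbit $[G]$ is the set of graphs obtainable from $G$ by finite sequences of local complementations. $\alpha(G)$ is the independence number of $G$ and $\lambda(G)=\max_{H\in[G]}\alpha(H)$. *)

theory Defs
  imports Main
begin

definition simple_graph :: "'a set \<Rightarrow> ('a \<Rightarrow> 'a \<Rightarrow> bool) \<Rightarrow> bool" where
  "simple_graph V E \<longleftrightarrow> finite V \<and> (\<forall>x y. E x y \<longrightarrow> E y x) \<and> (\<forall>x. \<not> E x x)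
     \<and> (\<forall>x y. E x y \<longrightarrow> x \<in> V \<and> y \<in> V)"

definition nbhd :: "('a \<Rightarrow> 'a \<Rightarrow> bool) \<Rightarrow> 'a \<Rightarrow> 'a set" where
  "nbhd E v = {x. E v x}"

definition local_compl :: "('a \<Rightarrow> 'a \<Rightarrow> bool) \<Rightarrow> 'a \<Rightarrow> ('a \<Rightarrow> 'a \<Rightarrow> bool)" where
  "local_compl E v = (\<lambda>x y. if x \<in> nbhd E v \<and> y \<in> nbhd E v \<and> x \<noteq> y then \<not> E x y else E x y)"

inductive_set lc_orbit :: "'a set \<Rightarrow> ('a \<Rightarrow> 'a \<Rightarrow> bool) \<Rightarrow> ('a \<Rightarrow> 'a \<Rightarrow> bool) set"
  for V :: "'a set" and E :: "'a \<Rightarrow> 'a \<Rightarrow> bool" where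
  base: "E \<in> lc_orbit V E"
| step: "H \<in> lc_orbit V E \<Longrightarrow> v \<in> V \<Longrightarrow> local_compl H v \<in> lc_orbit V E"

definition independent_set :: "'a set \<Rightarrow> ('a \<Rightarrow> 'a \<Rightarrow> bool) \<Rightarrow> 'a set \<Rightarrow> bool" where
  "independent_set V E S \<longleftrightarrow> S \<subseteq> V \<and> (\<forall>x\<in>S. \<forall>y\<in>S. \<not> E x y)"

definition clique :: "'a set \<Rightarrow> ('a \<Rightarrow> 'a \<Rightarrow> bool) \<Rightarrow> 'a set \<Rightarrow> bool" where
  "clique V E S \<longleftrightarrow> S \<subseteq> V \<and> (\<forall>x\<in>S. \<forall>y\<in>S. x \<noteq> y \<longrightarrow> E x y)"

definition indep_number :: "'a set \<Rightarrow> ('a \<Rightarrow> 'a \<Rightarrow> bool) \<Rightarrow> nat" where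
  "indep_number V E = Max (card ` {S. independent_set V E S})"

definition lc_lambda :: "'a set \<Rightarrow> ('a \<Rightarrow> 'a \<Rightarrow> bool) \<Rightarrow> nat" where
  "lc_lambda V E = Max (indep_number V ` lc_orbit V E)"

end

theory Submission
  imports Defs
begin

text \<open>Pick a vertex v of the clique S in a graph H of the orbit. All other vertices of S are
neighbours of v, so local complementation at v deletes every edge among them: S - {v} is
independent in the graph H^v, which again lies in the orbit.\<close>

lemma simple_graph_local_compl:
  assumes "simple_graph V E"
  shows "simple_graph V (local_compl E v)"
  using assms unfolding simple_graph_def local_compl_def nbhd_def by auto

lemma simple_graph_lc_orbit:
  assumes "H \<in> lc_orbit V E" "simple_graph V E"
  shows "simple_graph V H"
  using assms by (induction rule: lc_orbit.induct) (auto intro: simple_graph_local_compl)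

lemma finite_lc_orbit:
  assumes "simple_graph V E"
  shows "finite (lc_orbit V E)"
proof -
  have "lc_orbit V E \<subseteq> (\<lambda>R x y. (x, y) \<in> R) ` Pow (V \<times> V)"
  proof
    fix H assume "H \<in> lc_orbit V E"
    then have "simple_graph V H" using assms by (rule simple_graph_lc_orbit)
    then have "{(x, y). H x y} \<in> Pow (V \<times> V)" by (auto simp: simple_graph_def)
    moreover have "H = (\<lambda>x y. (x, y) \<in> {(x, y). H x y})" by simp
    ultimately show "H \<in> (\<lambda>R x y. (x, y) \<in> R) ` Pow (V \<times> V)" by blast
  qed
  moreover have "finite V" using assms by (simp add: simple_graph_def)
  ultimately show ?thesis by (auto intro: finite_subset)
qed

lemma card_le_indep_number:
  assumes "finite V" "independent_set V E S"
  shows "card S \<le> indep_number V E"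
proof -
  have "{S. independent_set V E S} \<subseteq> Pow V" by (auto simp: independent_set_def)
  then have "finite {S. independent_set V E S}" using assms(1) by (auto intro: finite_subset)
  then show ?thesis unfolding indep_number_def using assms(2) by simp
qed

lemma indep_number_le_lc_lambda:
  assumes "simple_graph V E" "H \<in> lc_orbit V E"
  shows "indep_number V H \<le> lc_lambda V E"
  unfolding lc_lambda_def using finite_lc_orbit[OF assms(1)] assms(2) by simp

lemma independent_set_local_compl_clique:
  assumes "simple_graph V H" "clique V H S" "v \<in> S"
  shows "independent_set V (local_compl H v) (S - {v})"
  using assms unfolding simple_graph_def clique_def independent_set_def local_compl_def nbhd_def
  by auto

theorem mainTheorem3:
  fixes V :: "'a set" and E H :: "'a \<Rightarrow> 'a \<Rightarrow> bool" and S :: "'a set" and k :: nat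
  assumes "simple_graph V E"
    and "H \<in> lc_orbit V E"
    and "clique V H S" and "card S = k" and "k \<ge> 1"
  shows "lc_lambda V E \<ge> k - 1"
proof -
  obtain v where "v \<in> S" using assms(4,5) by fastforce
  have "S \<subseteq> V" using assms(3) by (simp add: clique_def)
  have "finite V" using assms(1) by (simp add: simple_graph_def)
  have "local_compl H v \<in> lc_orbit V E"
    using assms(2) \<open>v \<in> S\<close> \<open>S \<subseteq> V\<close> by (blast intro: lc_orbit.step)
  have "independent_set V (local_compl H v) (S - {v})"
    using simple_graph_lc_orbit[OF assms(2,1)] assms(3) \<open>v \<in> S\<close>
    by (rule independent_set_local_compl_clique)
  then have "card (S - {v}) \<le> indep_number V (local_compl H v)"
    using card_le_indep_number[OF \<open>finite V\<close>] by blast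
  also have "\<dots> \<le> lc_lambda V E"
    using assms(1) \<open>local_compl H v \<in> lc_orbit V E\<close> by (rule indep_number_le_lc_lambda)
  finally show ?thesis
    using assms(4) \<open>v \<in> S\<close> \<open>S \<subseteq> V\<close> \<open>finite V\<close> by (simp add: finite_subset)
qed

end
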